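(* Consider the integral block packing algorithm driven by a multidimensional knapsack oracle ALG, producing the integral allocation $x$, and let $\lambda\ge0$. If $ALG^t\ge\lambda\cdot OPT^t$ for every $t$, then for every integral allocation $y$ and every horizon $T$, $SW_{[1:T]}(x)\ge\frac{\lambda}{1+\lambda}SW_{[1:T]}(y)$. Similarly, if $ALG^t\ge\lambda\cdot OPT^{*t}$ for every $t$, then for every fractional allocation $y^*$ and every horizon $T$, $SW_{[1:T]}(x)\ge\frac{\lambda}{1+\lambda}SW_{[1:T]}(y^* )$.
   Context: Online block packing: $m$ resources with capacities $B_j>0$; transactions $i\in\mathcal{C}$ with arrival time $a_i\in\{1,2,\dots\}$, base value $v_i\ge0$, discount $\rho_i\in[0,1]$, demand $w_i\in\mathbb{R}_+^m$; $v_i^t:=v_i(1-\rho_i)^{t-a_i}$. A fractional allocation is $\{x_i^t\}$ with $x_i^t\in[0,1]$, $x_i^t=0$ for $t<a_i$, $\sum_tx_i^t\le1$, and $\sum_iw_{ij}x_i^t\le B_j$ for all $t,j$; integral if all entries are in $\{0,1\}$. $SW_{[1:T]}(x)=\sum_{t=1}^T\sum_ix_i^tv_i^t$. The algorithm: for each $t=1,2,\dots$ let $A_t=\{i:a_i\le t\}$, $S_t=\{i:\exists s<t,\ x_i^s=1\}$, $U_t=A_t\setminus S_t$; the oracle ALG returns a set $\{x_i^t\}_{i\in U_t}\in\{0,1\}$ (with $x_i^t=0$ for $i\notin U_t$) satisfying $\sum_iw_{ij}x_i^t\le B_j$ for all $j$, where transaction $i$ has value $v_i^t$. Let $ALG^t=\sum_ix_i^tv_i^t$,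 let $OPT^t$ be the maximum of $\sum_{i\in U_t}z_iv_i^t$ over $z\in\{0,1\}^{U_t}$ with $\sum_iw_{ij}z_i\le B_j$ for all $j$, and $OPT^{*t}$ the same maximum over $z\in[0,1]^{U_t}$. *)

theory Defs
  imports Main "HOL.Real"
begin

text \<open>Instance: finite transaction set C, resources j < m with capacities B j,
 demands w i j, arrival times a i (>= 1), base values v i, discounts rho i.\<close>

definition tval :: "('i \<Rightarrow> real) \<Rightarrow> ('i \<Rightarrow> real) \<Rightarrow> ('i \<Rightarrow> nat) \<Rightarrow> 'i \<Rightarrow> nat \<Rightarrow> real" where
  "tval v rho a i t = v i * (1 - rho i) ^ (t - a i)"

text \<open>Fractional allocation (times are 1,2,...; since a i >= 1, entries at time 0 vanish).\<close>
definition frac_alloc :: "'i set \<Rightarrow> nat \<Rightarrow> (nat \<Rightarrow> real) \<Rightarrow> ('i \<Rightarrow> nat \<Rightarrow> real)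
    \<Rightarrow> ('i \<Rightarrow> nat) \<Rightarrow> ('i \<Rightarrow> nat \<Rightarrow> real) \<Rightarrow> bool" where
  "frac_alloc C m B w a y \<longleftrightarrow>
     (\<forall>i\<in>C. \<forall>t. 0 \<le> y i t \<and> y i t \<le> 1) \<and>
     (\<forall>i\<in>C. \<forall>t. t < a i \<longrightarrow> y i t = 0) \<and>
     (\<forall>i\<in>C. \<forall>T. (\<Sum>t\<le>T. y i t) \<le> 1) \<and>
     (\<forall>t. \<forall>j<m. (\<Sum>i\<in>C. w i j * y i t) \<le> B j)"

definition int_alloc :: "'i set \<Rightarrow> nat \<Rightarrow> (nat \<Rightarrow> real) \<Rightarrow> ('i \<Rightarrow> nat \<Rightarrow> real)
    \<Rightarrow> ('i \<Rightarrow> nat) \<Rightarrow> ('i \<Rightarrow> nat \<Rightarrow> real) \<Rightarrow> bool" where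
  "int_alloc C m B w a y \<longleftrightarrow> frac_alloc C m B w a y \<and> (\<forall>i\<in>C. \<forall>t. y i t \<in> {0, 1})"

definition SW :: "'i set \<Rightarrow> ('i \<Rightarrow> real) \<Rightarrow> ('i \<Rightarrow> real) \<Rightarrow> ('i \<Rightarrow> nat)
    \<Rightarrow> nat \<Rightarrow> ('i \<Rightarrow> nat \<Rightarrow> real) \<Rightarrow> real" where
  "SW C v rho a T y = (\<Sum>t\<in>{1..T}. \<Sum>i\<in>C. y i t * tval v rho a i t)"

definition Uset :: "'i set \<Rightarrow> ('i \<Rightarrow> nat) \<Rightarrow> ('i \<Rightarrow> nat \<Rightarrow> real) \<Rightarrow> nat \<Rightarrow> 'i set" where
  "Uset C a x t = {i \<in> C. a i \<le> t} - {i \<in> C. \<exists>s\<in>{1..<t}. x i s = 1}"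

definition alg_run :: "'i set \<Rightarrow> nat \<Rightarrow> (nat \<Rightarrow> real) \<Rightarrow> ('i \<Rightarrow> nat \<Rightarrow> real)
    \<Rightarrow> ('i \<Rightarrow> nat) \<Rightarrow> ('i \<Rightarrow> nat \<Rightarrow> real) \<Rightarrow> bool" where
  "alg_run C m B w a x \<longleftrightarrow>
     (\<forall>t\<ge>1. (\<forall>i\<in>C. x i t \<in> {0, 1}) \<and>
            (\<forall>i\<in>C. x i t = 1 \<longrightarrow> i \<in> Uset C a x t) \<and>
            (\<forall>j<m. (\<Sum>i\<in>C. w i j * x i t) \<le> B j))"

definition ALGt :: "'i set \<Rightarrow> ('i \<Rightarrow> real) \<Rightarrow> ('i \<Rightarrow> real) \<Rightarrow> ('i \<Rightarrow> nat)
    \<Rightarrow> ('i \<Rightarrow> nat \<Rightarrow> real) \<Rightarrow> nat \<Rightarrow> real" where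
  "ALGt C v rho a x t = (\<Sum>i\<in>C. x i t * tval v rho a i t)"

text \<open>OPT^t: best integral knapsack value over U_t (z in {0,1}^U_t, i.e. a subset S of U_t).\<close>
definition OPTt :: "'i set \<Rightarrow> nat \<Rightarrow> (nat \<Rightarrow> real) \<Rightarrow> ('i \<Rightarrow> nat \<Rightarrow> real)
    \<Rightarrow> ('i \<Rightarrow> real) \<Rightarrow> ('i \<Rightarrow> real) \<Rightarrow> ('i \<Rightarrow> nat) \<Rightarrow> ('i \<Rightarrow> nat \<Rightarrow> real) \<Rightarrow> nat \<Rightarrow> real" where
  "OPTt C m B w v rho a x t =
     Max {(\<Sum>i\<in>S. tval v rho a i t) | S. S \<subseteq> Uset C a x t \<and>
                                         (\<forall>j<m. (\<Sum>i\<in>S. w i j) \<le> B j)}"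

definition OPTstar :: "'i set \<Rightarrow> nat \<Rightarrow> (nat \<Rightarrow> real) \<Rightarrow> ('i \<Rightarrow> nat \<Rightarrow> real)
    \<Rightarrow> ('i \<Rightarrow> real) \<Rightarrow> ('i \<Rightarrow> real) \<Rightarrow> ('i \<Rightarrow> nat) \<Rightarrow> ('i \<Rightarrow> nat \<Rightarrow> real) \<Rightarrow> nat \<Rightarrow> real" where
  "OPTstar C m B w v rho a x t =
     Sup {(\<Sum>i\<in>Uset C a x t. z i * tval v rho a i t) | z.
            (\<forall>i\<in>Uset C a x t. 0 \<le> z i \<and> z i \<le> 1) \<and>
            (\<forall>j<m. (\<Sum>i\<in>Uset C a x t. w i j * z i) \<le> B j)}"

end

theory Submission
  imports Defs
begin

text \<open>Split the value of y at time t into transactions still unallocated by the algorithm and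
 transactions it has already allocated. The first part is a feasible solution of the knapsack
 instance of step t, so it is at most OPT^t (resp. OPT*^t), hence at most ALG^t / \<lambda>.
 A transaction allocated by the algorithm at time s only loses value afterwards, and y
 allocates it at most once in total, so the second part, summed over time, is at most
 SW(x). Together \<lambda> SW(y) \<le> SW(x) + \<lambda> SW(x).\<close>

lemma tval_nonneg:
  assumes "v i \<ge> 0" "0 \<le> rho i" "rho i \<le> 1"
  shows "tval v rho a i t \<ge> 0"
  using assms unfolding tval_def by simp

lemma tval_antimono:
  assumes "v i \<ge> 0" "0 \<le> rho i" "rho i \<le> 1" "s \<le> t"
  shows "tval v rho a i t \<le> tval v rho a i s"
proof -
  have "(1 - rho i) ^ (t - a i) \<le> (1 - rho i) ^ (s - a i)"
    by (rule power_decreasing) (use assms in auto)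
  then show ?thesis
    unfolding tval_def using assms(1) by (simp add: mult_left_mono)
qed

definition Served :: "'i set \<Rightarrow> ('i \<Rightarrow> nat \<Rightarrow> real) \<Rightarrow> nat \<Rightarrow> 'i set" where
  "Served C x t = {i \<in> C. \<exists>s\<in>{1..<t}. x i s = 1}"

lemma Uset_subset: "Uset C a x t \<subseteq> C"
  unfolding Uset_def by auto

lemma Served_subset: "Served C x t \<subseteq> C"
  unfolding Served_def by auto

lemma alg_run_allocates_once:
  assumes run: "alg_run C m B w a x" and "i \<in> C"
    and "1 \<le> s" "s < s'" "x i s = 1"
  shows "x i s' \<noteq> 1"
proof
  assume "x i s' = 1"
  with assms have "i \<in> Uset C a x s'"
    unfolding alg_run_def by auto
  with assms(3-5) show False
    unfolding Uset_def by auto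
qed

lemma sum_split_Uset_Served:
  assumes "finite C" and late: "\<forall>i\<in>C. t < a i \<longrightarrow> g i = 0"
  shows "(\<Sum>i\<in>C. g i) = (\<Sum>i\<in>Uset C a x t. g i) + (\<Sum>i\<in>Served C x t. g i)"
proof -
  have "(\<Sum>i\<in>C. g i) = (\<Sum>i\<in>Uset C a x t \<union> Served C x t. g i)"
    using late by (intro sum.mono_neutral_right) (auto simp: assms Uset_def Served_def)
  also have "\<dots> = (\<Sum>i\<in>Uset C a x t. g i) + (\<Sum>i\<in>Served C x t. g i)"
    using \<open>finite C\<close> by (intro sum.union_disjoint) (auto simp: Uset_def Served_def)
  finally show ?thesis .
qed

lemma served_value_le_allocated_value:
  assumes run: "alg_run C m B w a x" and i: "i \<in> C"
    and "v i \<ge> 0" "0 \<le> rho i" "rho i \<le> 1"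
    and y_nonneg: "\<forall>t. 0 \<le> y t" and y_total: "\<forall>T. (\<Sum>t\<le>T. y t) \<le> 1"
  shows "(\<Sum>t\<in>{1..T}. if i \<in> Served C x t then y t * tval v rho a i t else 0)
         \<le> (\<Sum>t\<in>{1..T}. x i t * tval v rho a i t)"
proof -
  have tval_nonneg': "tval v rho a i t \<ge> 0" for t
    using assms(3-5) by (rule tval_nonneg)
  have tval_antimono': "tval v rho a i t \<le> tval v rho a i s" if "s \<le> t" for s t
    using assms(3-5) that by (rule tval_antimono)
  have rhs_terms_nonneg: "x i t * tval v rho a i t \<ge> 0" if "t \<in> {1..T}" for t
  proof -
    have "x i t \<in> {0, 1}"
      using run i that unfolding alg_run_def by auto
    then show ?thesis
      using tval_nonneg'[of t] by auto
  qed
  show ?thesis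
  proof (cases "\<exists>s\<in>{1..<T}. x i s = 1")
    case False
    then have "(\<Sum>t\<in>{1..T}. if i \<in> Served C x t then y t * tval v rho a i t else 0) = 0"
      by (intro sum.neutral) (auto simp: Served_def)
    also have "\<dots> \<le> (\<Sum>t\<in>{1..T}. x i t * tval v rho a i t)"
      using rhs_terms_nonneg by (intro sum_nonneg) auto
    finally show ?thesis .
  next
    case True
    then obtain s where s: "s \<in> {1..<T}" "x i s = 1" by blast
    have served_after_s: "s < t" if served: "i \<in> Served C x t" for t
    proof -
      obtain s' where "s' \<in> {1..<t}" "x i s' = 1"
        using served unfolding Served_def by blast
      with s alg_run_allocates_once[OF run i] show ?thesis
        by (metis atLeastLessThan_iff not_less_iff_gr_or_eq)
    qed
    have "(\<Sum>t\<in>{1..T}. if i \<in> Served C x t then y t * tval v rho a i t else 0)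
        \<le> (\<Sum>t\<in>{1..T}. y t * tval v rho a i s)"
    proof (intro sum_mono)
      fix t
      show "(if i \<in> Served C x t then y t * tval v rho a i t else 0) \<le> y t * tval v rho a i s"
        using y_nonneg tval_nonneg'[of s] served_after_s[of t]
          tval_antimono'[of s t]
        by (auto intro: mult_left_mono)
    qed
    also have "\<dots> \<le> (\<Sum>t\<le>T. y t) * tval v rho a i s"
      unfolding sum_distrib_right
      using y_nonneg tval_nonneg' by (intro sum_mono2) auto
    also have "\<dots> \<le> x i s * tval v rho a i s"
      using mult_right_mono[OF y_total[rule_format, of T] tval_nonneg'[of s]] s(2) by simp
    also have "\<dots> \<le> (\<Sum>t\<in>{1..T}. x i t * tval v rho a i t)"
      using s rhs_terms_nonneg by (intro member_le_sum) auto
    finally show ?thesis .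
  qed
qed

lemma sum_Served_value_le_SW:
  assumes "finite C" and run: "alg_run C m B w a x"
    and vnn: "\<forall>i\<in>C. v i \<ge> 0" and rho01: "\<forall>i\<in>C. 0 \<le> rho i \<and> rho i \<le> 1"
    and y_nonneg: "\<forall>i\<in>C. \<forall>t. 0 \<le> y i t" and y_total: "\<forall>i\<in>C. \<forall>T. (\<Sum>t\<le>T. y i t) \<le> 1"
  shows "(\<Sum>t\<in>{1..T}. \<Sum>i\<in>Served C x t. y i t * tval v rho a i t) \<le> SW C v rho a T x"
proof -
  have "(\<Sum>t\<in>{1..T}. \<Sum>i\<in>Served C x t. y i t * tval v rho a i t)
      = (\<Sum>t\<in>{1..T}. \<Sum>i\<in>C. if i \<in> Served C x t then y i t * tval v rho a i t else 0)"
    using \<open>finite C\<close> by (simp add: sum.inter_restrict[symmetric] inf.absorb2 Served_subset)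
  also have "\<dots> = (\<Sum>i\<in>C. \<Sum>t\<in>{1..T}. if i \<in> Served C x t then y i t * tval v rho a i t else 0)"
    by (rule sum.swap)
  also have "\<dots> \<le> (\<Sum>i\<in>C. \<Sum>t\<in>{1..T}. x i t * tval v rho a i t)"
    using vnn rho01 y_nonneg y_total
    by (intro sum_mono served_value_le_allocated_value[OF run]) auto
  also have "\<dots> = SW C v rho a T x"
    unfolding SW_def by (rule sum.swap)
  finally show ?thesis .
qed

lemma frac_alloc_capacity_subset:
  assumes "finite C" "frac_alloc C m B w a y" "\<forall>i\<in>C. \<forall>j<m. w i j \<ge> 0" "U \<subseteq> C" "j < m"
  shows "(\<Sum>i\<in>U. w i j * y i t) \<le> B j"
proof -
  have "(\<Sum>i\<in>U. w i j * y i t) \<le> (\<Sum>i\<in>C. w i j * y i t)"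
    using assms unfolding frac_alloc_def by (intro sum_mono2) auto
  also have "\<dots> \<le> B j"
    using assms unfolding frac_alloc_def by auto
  finally show ?thesis .
qed

lemma sum_zero_one_weights:
  fixes z g :: "'i \<Rightarrow> 'a::semiring_1"
  assumes "finite U" "\<forall>i\<in>U. z i \<in> {0, 1}"
  shows "(\<Sum>i\<in>U. z i * g i) = (\<Sum>i\<in>{i\<in>U. z i = 1}. g i)"
proof -
  have "z i * g i = (if z i = 1 then g i else 0)" if "i \<in> U" for i
    using assms(2) that by force
  then have "(\<Sum>i\<in>U. z i * g i) = (\<Sum>i\<in>U. if z i = 1 then g i else 0)"
    by (rule sum.cong[OF refl])
  also have "\<dots> = (\<Sum>i\<in>{i\<in>U. z i = 1}. g i)"
    using assms(1) by (simp add: sum.inter_filter)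
  finally show ?thesis .
qed

lemma int_alloc_Uset_value_le_OPTt:
  assumes "finite C" "int_alloc C m B w a y" "\<forall>i\<in>C. \<forall>j<m. w i j \<ge> 0"
  shows "(\<Sum>i\<in>Uset C a x t. y i t * tval v rho a i t) \<le> OPTt C m B w v rho a x t"
proof -
  define U where "U = Uset C a x t"
  define S where "S = {i\<in>U. y i t = 1}"
  let ?values = "{(\<Sum>i\<in>S. tval v rho a i t) | S. S \<subseteq> U \<and> (\<forall>j<m. (\<Sum>i\<in>S. w i j) \<le> B j)}"
  have "U \<subseteq> C"
    unfolding U_def by (rule Uset_subset)
  then have "finite U"
    using \<open>finite C\<close> by (rule finite_subset)
  have y01: "\<forall>i\<in>U. y i t \<in> {0, 1}"
    using assms(2) \<open>U \<subseteq> C\<close> unfolding int_alloc_def by blast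
  have "(\<Sum>i\<in>S. w i j) \<le> B j" if "j < m" for j
  proof -
    have "(\<Sum>i\<in>S. w i j) = (\<Sum>i\<in>U. w i j * y i t)"
      using sum_zero_one_weights[OF \<open>finite U\<close> y01, of "\<lambda>i. w i j"]
      unfolding S_def by (simp add: mult.commute)
    also have "\<dots> \<le> B j"
      using assms(2) unfolding int_alloc_def
      by (intro frac_alloc_capacity_subset[OF assms(1) _ assms(3) \<open>U \<subseteq> C\<close> that]) blast
    finally show ?thesis .
  qed
  moreover have "S \<subseteq> U"
    unfolding S_def by blast
  ultimately have "(\<Sum>i\<in>S. tval v rho a i t) \<in> ?values"
    by blast
  moreover have "finite ?values"
    by (rule finite_subset[where B = "(\<lambda>S. \<Sum>i\<in>S. tval v rho a i t) ` Pow U"])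
      (use \<open>finite U\<close> in auto)
  ultimately have "(\<Sum>i\<in>S. tval v rho a i t) \<le> OPTt C m B w v rho a x t"
    unfolding OPTt_def U_def[symmetric] by (intro Max_ge)
  then show ?thesis
    using sum_zero_one_weights[OF \<open>finite U\<close> y01] unfolding S_def U_def by simp
qed

lemma frac_alloc_Uset_value_le_OPTstar:
  assumes "finite C" "frac_alloc C m B w a y" "\<forall>i\<in>C. \<forall>j<m. w i j \<ge> 0"
  shows "(\<Sum>i\<in>Uset C a x t. y i t * tval v rho a i t) \<le> OPTstar C m B w v rho a x t"
proof -
  define U where "U = Uset C a x t"
  let ?values = "{(\<Sum>i\<in>U. z i * tval v rho a i t) | z.
      (\<forall>i\<in>U. 0 \<le> z i \<and> z i \<le> 1) \<and> (\<forall>j<m. (\<Sum>i\<in>U. w i j * z i) \<le> B j)}"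
  have "U \<subseteq> C"
    unfolding U_def by (rule Uset_subset)
  have "\<forall>i\<in>U. 0 \<le> y i t \<and> y i t \<le> 1"
    using assms(2) \<open>U \<subseteq> C\<close> unfolding frac_alloc_def by blast
  moreover have "\<forall>j<m. (\<Sum>i\<in>U. w i j * y i t) \<le> B j"
    using frac_alloc_capacity_subset[OF assms \<open>U \<subseteq> C\<close>] by blast
  ultimately have "(\<Sum>i\<in>U. y i t * tval v rho a i t) \<in> ?values"
    by (intro CollectI exI[of _ "\<lambda>i. y i t"]) simp
  moreover have "bdd_above ?values"
  proof (rule bdd_aboveI)
    fix r assume "r \<in> ?values"
    then obtain z where r: "r = (\<Sum>i\<in>U. z i * tval v rho a i t)"
      and z01: "\<forall>i\<in>U. 0 \<le> z i \<and> z i \<le> 1"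
      by blast
    have "z i * tval v rho a i t \<le> \<bar>tval v rho a i t\<bar>" if "i \<in> U" for i
    proof -
      have "z i * tval v rho a i t \<le> z i * \<bar>tval v rho a i t\<bar>"
        using z01 that by (intro mult_left_mono) auto
      also have "\<dots> \<le> \<bar>tval v rho a i t\<bar>"
        using z01 that by (intro mult_left_le_one_le) auto
      finally show ?thesis .
    qed
    then show "r \<le> (\<Sum>i\<in>U. \<bar>tval v rho a i t\<bar>)"
      unfolding r by (rule sum_mono)
  qed
  ultimately show ?thesis
    unfolding OPTstar_def U_def[symmetric] by (rule cSup_upper)
qed

lemma SW_competitive_of_Uset_bound:
  fixes lam :: real
  assumes "finite C" and run: "alg_run C m B w a x" and "lam \<ge> 0"
    and vnn: "\<forall>i\<in>C. v i \<ge> 0" and rho01: "\<forall>i\<in>C. 0 \<le> rho i \<and> rho i \<le> 1"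
    and y: "frac_alloc C m B w a y"
    and Uset_bound: "\<forall>t\<ge>1. lam * (\<Sum>i\<in>Uset C a x t. y i t * tval v rho a i t) \<le> ALGt C v rho a x t"
  shows "SW C v rho a T x \<ge> lam / (1 + lam) * SW C v rho a T y"
proof -
  let ?unallocated = "\<Sum>t\<in>{1..T}. \<Sum>i\<in>Uset C a x t. y i t * tval v rho a i t"
  let ?allocated = "\<Sum>t\<in>{1..T}. \<Sum>i\<in>Served C x t. y i t * tval v rho a i t"
  have "SW C v rho a T y = ?unallocated + ?allocated"
    using y unfolding SW_def sum.distrib[symmetric] frac_alloc_def
    by (intro sum.cong refl sum_split_Uset_Served[OF \<open>finite C\<close>]) auto
  moreover have "lam * ?unallocated \<le> SW C v rho a T x"
  proof -
    have "lam * ?unallocated = (\<Sum>t\<in>{1..T}. lam * (\<Sum>i\<in>Uset C a x t. y i t * tval v rho a i t))"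
      by (rule sum_distrib_left)
    also have "\<dots> \<le> (\<Sum>t\<in>{1..T}. ALGt C v rho a x t)"
      using Uset_bound by (intro sum_mono) auto
    also have "\<dots> = SW C v rho a T x"
      unfolding ALGt_def SW_def ..
    finally show ?thesis .
  qed
  moreover have "?allocated \<le> SW C v rho a T x"
    using y unfolding frac_alloc_def
    by (intro sum_Served_value_le_SW[OF \<open>finite C\<close> run vnn rho01]) auto
  then have "lam * ?allocated \<le> lam * SW C v rho a T x"
    using \<open>lam \<ge> 0\<close> by (rule mult_left_mono)
  ultimately have "lam * SW C v rho a T y \<le> (1 + lam) * SW C v rho a T x"
    by (simp add: algebra_simps)
  then show ?thesis
    using \<open>lam \<ge> 0\<close> by (simp add: field_simps)
qed

theorem lemma3:
  fixes C :: "'i set" and m :: nat and B :: "nat \<Rightarrow> real" and w :: "'i \<Rightarrow> nat \<Rightarrow> real"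
    and a :: "'i \<Rightarrow> nat" and v rho :: "'i \<Rightarrow> real" and x :: "'i \<Rightarrow> nat \<Rightarrow> real"
    and lam :: real
  assumes finC: "finite C"
    and Bpos: "\<forall>j<m. B j > 0"
    and wnn: "\<forall>i\<in>C. \<forall>j<m. w i j \<ge> 0"
    and arr: "\<forall>i\<in>C. a i \<ge> 1"
    and vnn: "\<forall>i\<in>C. v i \<ge> 0"
    and rho01: "\<forall>i\<in>C. 0 \<le> rho i \<and> rho i \<le> 1"
    and run: "alg_run C m B w a x"
    and lamnn: "lam \<ge> 0"
  shows "((\<forall>t\<ge>1. ALGt C v rho a x t \<ge> lam * OPTt C m B w v rho a x t) \<longrightarrow>
           (\<forall>y T. int_alloc C m B w a y \<longrightarrow>
              SW C v rho a T x \<ge> lam / (1 + lam) * SW C v rho a T y))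
       \<and> ((\<forall>t\<ge>1. ALGt C v rho a x t \<ge> lam * OPTstar C m B w v rho a x t) \<longrightarrow>
           (\<forall>y T. frac_alloc C m B w a y \<longrightarrow>
              SW C v rho a T x \<ge> lam / (1 + lam) * SW C v rho a T y))"
proof (intro conjI impI allI)
  fix y T
  assume ALG_OPT: "\<forall>t\<ge>1. ALGt C v rho a x t \<ge> lam * OPTt C m B w v rho a x t"
    and y: "int_alloc C m B w a y"
  have "lam * (\<Sum>i\<in>Uset C a x t. y i t * tval v rho a i t) \<le> lam * OPTt C m B w v rho a x t" for t
    using int_alloc_Uset_value_le_OPTt[OF finC y wnn] lamnn by (rule mult_left_mono)
  with ALG_OPT y show "SW C v rho a T x \<ge> lam / (1 + lam) * SW C v rho a T y"
    unfolding int_alloc_def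
    by (intro SW_competitive_of_Uset_bound[OF finC run lamnn vnn rho01]) (auto intro: order.trans)
next
  fix y T
  assume ALG_OPT: "\<forall>t\<ge>1. ALGt C v rho a x t \<ge> lam * OPTstar C m B w v rho a x t"
    and y: "frac_alloc C m B w a y"
  have "lam * (\<Sum>i\<in>Uset C a x t. y i t * tval v rho a i t) \<le> lam * OPTstar C m B w v rho a x t" for t
    using frac_alloc_Uset_value_le_OPTstar[OF finC y wnn] lamnn by (rule mult_left_mono)
  with ALG_OPT y show "SW C v rho a T x \<ge> lam / (1 + lam) * SW C v rho a T y"
    by (intro SW_competitive_of_Uset_bound[OF finC run lamnn vnn rho01]) (auto intro: order.trans)
qed

end
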